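(* Let $q\ge 2$ and $n\ge 1$ be integers, $N=\{1,\dots,n\}$, $F^c=\{-\tfrac{q-1}{2},-\tfrac{q-3}{2},\dots,\tfrac{q-3}{2},\tfrac{q-1}{2}\}$ and $\Omega=(F^c)^N$. For each subset $A\subset N$ with $|A|\ge 2$ let $J_A\ge 0$ be given, and define $H_\gamma=-\sum_{A}J_A\,\delta_{(\sigma^A)_\gamma}$, where for $A=\{i_1,\dots,i_k\}$, $\delta_{(\sigma^A)_\gamma}=1$ if $(\sigma_{i_1})_\gamma=\dots=(\sigma_{i_k})_\gamma$ and $0$ otherwise. Let $Z_\gamma=\exp(-H_\gamma)$, $Z=\sum_{\gamma\in\Omega}Z_\gamma$, $P(\gamma)=Z_\gamma/Z$, and $\langle X\rangle=\sum_\gamma X(\gamma)P(\gamma)$. For a finite list $R$ of elements of $N$ (repetitions allowed) set $\sigma^R=\prod_{i\in R}\sigma_i$ (product with multiplicity, $\sigma^\emptyset\equiv 1$), where $\sigma_i(\gamma)=(\sigma_i)_\gamma$ is the $i$-th coordinate of $\gamma$. Then for any two such lists $R$ and $S$, $$\langle\sigma^R\sigma^S\rangle-\langle\sigma^R\rangle\langle\sigma^S\rangle\ge 0.$$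
   Context: This is a generalized ferromagnetic $q$-state Potts model with multi-spin interactions, with spin values taken in the centered set $F^c$ (equivalently, $\sigma_i$ is the Potts spin in $\{1,\dots,q\}$ minus $(q+1)/2$); the inverse temperature is set to $1$. The paper formally also permits $J_A=+\infty$. *)

theory Defs
  imports Complex_Main "HOL-Library.FuncSet"
begin

definition Fc :: "nat \<Rightarrow> real set" where
  "Fc q = (\<lambda>k. real k - (real q - 1) / 2) ` {0..<q}"

definition Omega :: "nat \<Rightarrow> nat \<Rightarrow> (nat \<Rightarrow> real) set" where
  "Omega q n = PiE {1..n} (\<lambda>_. Fc q)"

definition interactions :: "nat \<Rightarrow> nat set set" where
  "interactions n = {A. A \<subseteq> {1..n} \<and> 2 \<le> card A}"

definition delta :: "nat set \<Rightarrow> (nat \<Rightarrow> real) \<Rightarrow> real" where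
  "delta A \<gamma> = (if \<forall>i\<in>A. \<forall>j\<in>A. \<gamma> i = \<gamma> j then 1 else 0)"

definition Ham :: "nat \<Rightarrow> (nat set \<Rightarrow> real) \<Rightarrow> (nat \<Rightarrow> real) \<Rightarrow> real" where
  "Ham n J \<gamma> = - (\<Sum>A\<in>interactions n. J A * delta A \<gamma>)"

definition Zg :: "nat \<Rightarrow> (nat set \<Rightarrow> real) \<Rightarrow> (nat \<Rightarrow> real) \<Rightarrow> real" where
  "Zg n J \<gamma> = exp (- Ham n J \<gamma>)"

definition Zpart :: "nat \<Rightarrow> nat \<Rightarrow> (nat set \<Rightarrow> real) \<Rightarrow> real" where
  "Zpart q n J = (\<Sum>\<gamma>\<in>Omega q n. Zg n J \<gamma>)"

definition Prob :: "nat \<Rightarrow> nat \<Rightarrow> (nat set \<Rightarrow> real) \<Rightarrow> (nat \<Rightarrow> real) \<Rightarrow> real" where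
  "Prob q n J \<gamma> = Zg n J \<gamma> / Zpart q n J"

definition expect :: "nat \<Rightarrow> nat \<Rightarrow> (nat set \<Rightarrow> real) \<Rightarrow> ((nat \<Rightarrow> real) \<Rightarrow> real) \<Rightarrow> real" where
  "expect q n J X = (\<Sum>\<gamma>\<in>Omega q n. X \<gamma> * Prob q n J \<gamma>)"

definition sigmaR :: "nat list \<Rightarrow> (nat \<Rightarrow> real) \<Rightarrow> real" where
  "sigmaR R \<gamma> = prod_list (map \<gamma> R)"

end

theory Submission
  imports Defs "HOL-Library.Function_Algebras" "HOL-Library.Numeral_Type"
begin

text \<open>
  Expanding each Boltzmann factor exp (J_A delta_A) = 1 + (exp J_A - 1) delta_A turns every
  Gibbs sum into a sum over sets B of bonds (random-cluster representation), with nonnegative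
  weights w B that are multiplicative: w B w B' = w (B \<union> B') w (B \<inter> B'). By the four
  functions theorem of Ahlswede and Daykin on the lattice of bond sets it then suffices to show
  M_B(sigma^R) M_B'(sigma^S) \<le> M_(B \<union> B')(sigma^R sigma^S) M_(B \<inter> B')(1), where M_B sums
  over the configurations that are constant on each cluster of B.

  Such configurations are independent uniform spins on the clusters, so
  M_B(sigma^R) = q^k(B) \<Prod>_clusters m(n_c), where k(B) is the number of clusters, n_c the
  number of entries of R lying in cluster c and m the moments of the uniform distribution on F^c.
  As F^c is symmetric, odd moments vanish and even ones are nonnegative, and by Chebyshev's sum
  inequality m a * m b \<le> m (a + b); hence merging clusters and concatenating R and S can only
  increase the product of moments. What remains, k(B) + k(B') \<le> k(B \<inter> B') + k(B \<union> B'),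
  follows by counting the analogous configurations with values in a two-element group: they form
  subgroups U_B with U_B \<inter> U_B' = U_(B \<union> B') and U_B + U_B' \<subseteq> U_(B \<inter> B'), and
  |U||W| \<le> |U + W||U \<inter> W| for subgroups.
\<close>

section \<open>The Ahlswede--Daykin inequality\<close>

lemma ahlswede_daykin_two_point:
  fixes a0 a1 b0 b1 c0 c1 d0 d1 :: real
  assumes nonneg: "0 \<le> a0" "0 \<le> a1" "0 \<le> b0" "0 \<le> b1" "0 \<le> c0" "0 \<le> c1" "0 \<le> d0" "0 \<le> d1"
    and h00: "a0 * b0 \<le> c0 * d0" and h01: "a0 * b1 \<le> c1 * d0"
    and h10: "a1 * b0 \<le> c1 * d0" and h11: "a1 * b1 \<le> c1 * d1"
  shows "(a0 + a1) * (b0 + b1) \<le> (c0 + c1) * (d0 + d1)"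
proof (cases "c1 * d0 = 0")
  case True
  then have "a0 * b1 = 0" "a1 * b0 = 0"
    using h01 h10 nonneg by (metis mult_nonneg_nonneg order_antisym)+
  moreover have "0 \<le> c0 * d1" using nonneg by simp
  ultimately show ?thesis
    using h00 h11 True unfolding distrib_left distrib_right by linarith
next
  case False
  define s where "s = c1 * d0"
  have "s > 0" using False nonneg unfolding s_def by (simp add: less_le)
  have "(c0 * d1) * s = (c0 * d0) * (c1 * d1)" unfolding s_def by (simp add: algebra_simps)
  also have "\<dots> \<ge> (a0 * b0) * (a1 * b1)"
    by (rule mult_mono[OF h00 h11]) (use nonneg in simp_all)
  finally have cross: "(c0 * d1) * s \<ge> (a0 * b1) * (a1 * b0)" by (simp add: algebra_simps)
  have "(s - a0 * b1) * (s - a1 * b0) \<ge> 0"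
    using h01 h10 unfolding s_def by (intro mult_nonneg_nonneg) auto
  with cross have "s * (s + c0 * d1) \<ge> s * (a0 * b1 + a1 * b0)" by (simp add: algebra_simps)
  with \<open>s > 0\<close> have "s + c0 * d1 \<ge> a0 * b1 + a1 * b0" by simp
  then show ?thesis using h00 h11 unfolding s_def by (simp add: algebra_simps)
qed

lemma sum_Pow_insert:
  assumes "finite E" "e \<notin> E"
  shows "(\<Sum>B\<in>Pow (insert e E). f B) = (\<Sum>B\<in>Pow E. f B + f (insert e B))"
proof -
  have "inj_on (insert e) (Pow E)"
    using assms unfolding inj_on_def by (metis Diff_insert_absorb PowD subsetD)
  moreover have "Pow E \<inter> insert e ` Pow E = {}" using assms by auto
  ultimately show ?thesis
    using assms by (simp add: Pow_insert sum.union_disjoint sum.reindex sum.distrib)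
qed

theorem ahlswede_daykin:
  fixes \<alpha> \<beta> \<gamma> \<delta> :: "'a set \<Rightarrow> real"
  assumes "finite E"
    and "\<And>B. B \<subseteq> E \<Longrightarrow> 0 \<le> \<alpha> B \<and> 0 \<le> \<beta> B \<and> 0 \<le> \<gamma> B \<and> 0 \<le> \<delta> B"
    and "\<And>B B'. B \<subseteq> E \<Longrightarrow> B' \<subseteq> E \<Longrightarrow> \<alpha> B * \<beta> B' \<le> \<gamma> (B \<union> B') * \<delta> (B \<inter> B')"
  shows "(\<Sum>B\<in>Pow E. \<alpha> B) * (\<Sum>B\<in>Pow E. \<beta> B) \<le> (\<Sum>B\<in>Pow E. \<gamma> B) * (\<Sum>B\<in>Pow E. \<delta> B)"
  using assms
proof (induction E arbitrary: \<alpha> \<beta> \<gamma> \<delta> rule: finite_induct)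
  case empty
  then show ?case by simp
next
  case (insert e E)
  let ?fold = "\<lambda>f B. f B + f (insert e B)"
  have "(\<Sum>B\<in>Pow E. ?fold \<alpha> B) * (\<Sum>B\<in>Pow E. ?fold \<beta> B)
      \<le> (\<Sum>B\<in>Pow E. ?fold \<gamma> B) * (\<Sum>B\<in>Pow E. ?fold \<delta> B)"
  proof (rule insert.IH)
    fix B assume "B \<subseteq> E"
    then have "B \<subseteq> insert e E" "insert e B \<subseteq> insert e E" by auto
    then show "0 \<le> ?fold \<alpha> B \<and> 0 \<le> ?fold \<beta> B \<and> 0 \<le> ?fold \<gamma> B \<and> 0 \<le> ?fold \<delta> B"
      using insert.prems(1)[of B] insert.prems(1)[of "insert e B"] by auto
  next
    fix B B' assume B: "B \<subseteq> E" and B': "B' \<subseteq> E"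
    have "e \<notin> B" "e \<notin> B'" using B B' insert.hyps by auto
    then have sets: "insert e B \<union> B' = insert e (B \<union> B')" "B \<union> insert e B' = insert e (B \<union> B')"
      "insert e B \<union> insert e B' = insert e (B \<union> B')" "insert e B \<inter> B' = B \<inter> B'"
      "B \<inter> insert e B' = B \<inter> B'" "insert e B \<inter> insert e B' = insert e (B \<inter> B')" by auto
    have sub: "B \<subseteq> insert e E" "insert e B \<subseteq> insert e E" "B' \<subseteq> insert e E"
      "insert e B' \<subseteq> insert e E" using B B' by auto
    have nonneg: "0 \<le> f C" if "f \<in> {\<alpha>, \<beta>, \<gamma>, \<delta>}" "C \<subseteq> insert e E" for f C
      using that insert.prems(1)[of C] by auto
    have h: "\<alpha> X * \<beta> Y \<le> \<gamma> (X \<union> Y) * \<delta> (X \<inter> Y)"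
      if "X \<subseteq> insert e E" "Y \<subseteq> insert e E" for X Y
      using insert.prems(2) that .
    show "?fold \<alpha> B * ?fold \<beta> B' \<le> ?fold \<gamma> (B \<union> B') * ?fold \<delta> (B \<inter> B')"
      by (rule ahlswede_daykin_two_point[OF _ _ _ _ _ _ _ _
            h[OF sub(1,3)] h[OF sub(1,4), unfolded sets] h[OF sub(2,3), unfolded sets]
            h[OF sub(2,4), unfolded sets]])
        (use B B' in \<open>auto intro!: nonneg\<close>)
  qed
  then show ?case using insert.hyps by (simp add: sum_Pow_insert)
qed

section \<open>Moments of a symmetric set of reals\<close>

definition moment :: "real set \<Rightarrow> nat \<Rightarrow> real" where
  "moment F k = (\<Sum>x\<in>F. x ^ k) / card F"

lemma sum_power_odd_eq_0:
  fixes F :: "real set"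
  assumes sym: "\<And>x. x \<in> F \<Longrightarrow> - x \<in> F" and "odd k"
  shows "(\<Sum>x\<in>F. x ^ k) = 0"
proof -
  have "bij_betw uminus F F"
    by (rule bij_betwI[where g = uminus]) (auto simp: sym)
  then have "(\<Sum>x\<in>F. x ^ k) = (\<Sum>x\<in>F. (- x) ^ k)"
    using sum.reindex_bij_betw[of uminus F F "\<lambda>x. x ^ k"] by simp
  also have "\<dots> = - (\<Sum>x\<in>F. x ^ k)" using \<open>odd k\<close> by (simp add: sum_negf)
  finally show ?thesis by simp
qed

lemma moment_odd: "(\<And>x. x \<in> F \<Longrightarrow> - x \<in> F) \<Longrightarrow> odd k \<Longrightarrow> moment F k = 0"
  by (simp add: moment_def sum_power_odd_eq_0)

lemma moment_nonneg:
  assumes "\<And>x. x \<in> F \<Longrightarrow> - x \<in> F"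
  shows "0 \<le> moment F k"
proof (cases "even k")
  case True
  then show ?thesis unfolding moment_def by (intro divide_nonneg_nonneg sum_nonneg) auto
qed (simp add: moment_odd assms)

lemma moment_0: "finite F \<Longrightarrow> F \<noteq> {} \<Longrightarrow> moment F 0 = 1"
  by (simp add: moment_def)

text \<open>Chebyshev's sum inequality: x^a and x^b are similarly ordered when a and b are even.\<close>
lemma sum_power_mult_le_even:
  fixes F :: "real set"
  assumes "even a" "even b"
  shows "(\<Sum>x\<in>F. x ^ a) * (\<Sum>x\<in>F. x ^ b) \<le> card F * (\<Sum>x\<in>F. x ^ (a + b))"
proof -
  have similar: "0 \<le> (x ^ a - y ^ a) * (x ^ b - y ^ b)" for x y :: real
  proof -
    have "x ^ a = \<bar>x\<bar> ^ a" "y ^ a = \<bar>y\<bar> ^ a" "x ^ b = \<bar>x\<bar> ^ b" "y ^ b = \<bar>y\<bar> ^ b"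
      using assms by (simp_all add: power_even_abs)
    moreover have "\<bar>x\<bar> ^ c \<le> \<bar>y\<bar> ^ c" if "\<bar>x\<bar> \<le> \<bar>y\<bar>" for c
      using that by (simp add: power_mono)
    moreover have "\<bar>y\<bar> ^ c \<le> \<bar>x\<bar> ^ c" if "\<bar>y\<bar> \<le> \<bar>x\<bar>" for c
      using that by (simp add: power_mono)
    ultimately show ?thesis
      by (cases "\<bar>x\<bar> \<le> \<bar>y\<bar>") (auto intro: mult_nonpos_nonpos mult_nonneg_nonneg)
  qed
  have "(\<Sum>x\<in>F. \<Sum>y\<in>F. (x ^ a - y ^ a) * (x ^ b - y ^ b))
      = (\<Sum>x\<in>F. \<Sum>y\<in>F. x ^ (a + b)) + (\<Sum>x\<in>F. \<Sum>y\<in>F. y ^ (a + b))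
        - (\<Sum>x\<in>F. \<Sum>y\<in>F. x ^ a * y ^ b) - (\<Sum>x\<in>F. \<Sum>y\<in>F. y ^ a * x ^ b)"
    by (simp add: algebra_simps sum.distrib sum_subtractf power_add)
  also have "\<dots> = 2 * (card F * (\<Sum>x\<in>F. x ^ (a + b))) - 2 * ((\<Sum>x\<in>F. x ^ a) * (\<Sum>x\<in>F. x ^ b))"
    by (simp add: sum_product[symmetric] sum_distrib_left[symmetric] sum_distrib_right[symmetric]
        sum.swap[of "\<lambda>x y. y ^ a * x ^ b"] algebra_simps)
  finally have "(\<Sum>x\<in>F. \<Sum>y\<in>F. (x ^ a - y ^ a) * (x ^ b - y ^ b))
      = 2 * (card F * (\<Sum>x\<in>F. x ^ (a + b))) - 2 * ((\<Sum>x\<in>F. x ^ a) * (\<Sum>x\<in>F. x ^ b))" .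
  moreover have "0 \<le> (\<Sum>x\<in>F. \<Sum>y\<in>F. (x ^ a - y ^ a) * (x ^ b - y ^ b))"
    by (intro sum_nonneg similar)
  ultimately show ?thesis by simp
qed

lemma moment_mult_le:
  assumes "finite F" "\<And>x. x \<in> F \<Longrightarrow> - x \<in> F"
  shows "moment F a * moment F b \<le> moment F (a + b)"
proof (cases "even a \<and> even b")
  case True
  show ?thesis
  proof (cases "F = {}")
    case False
    with \<open>finite F\<close> have "0 < real (card F)" by (simp add: card_gt_0_iff)
    then show ?thesis
      using sum_power_mult_le_even[of a b F] True
      unfolding moment_def by (simp add: field_simps power2_eq_square)
  qed (simp add: moment_def)
qed (use assms in \<open>auto simp: moment_odd moment_nonneg\<close>)

lemma prod_moment_le:
  assumes "finite F" "F \<noteq> {}" "\<And>x. x \<in> F \<Longrightarrow> - x \<in> F" "finite K"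
  shows "(\<Prod>b\<in>K. moment F (c b)) \<le> moment F (\<Sum>b\<in>K. c b)"
  using assms(4)
proof (induction K rule: finite_induct)
  case empty
  then show ?case using assms by (simp add: moment_0)
next
  case (insert b K)
  have "(\<Prod>b\<in>insert b K. moment F (c b)) \<le> moment F (c b) * moment F (\<Sum>b\<in>K. c b)"
    using insert by (simp add: mult_left_mono moment_nonneg assms)
  also have "\<dots> \<le> moment F (\<Sum>b\<in>insert b K. c b)"
    using insert moment_mult_le[OF assms(1,3)] by simp
  finally show ?case .
qed

section \<open>Clusters of a set of bonds\<close>

definition same_cluster :: "'i set set \<Rightarrow> 'i \<Rightarrow> 'i \<Rightarrow> bool" where
  "same_cluster B = (\<lambda>i j. \<exists>A\<in>B. i \<in> A \<and> j \<in> A)\<^sup>*\<^sup>*"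

definition cluster_rep :: "'i::wellorder set set \<Rightarrow> 'i \<Rightarrow> 'i" where
  "cluster_rep B i = (LEAST j. same_cluster B i j)"

definition clusters :: "'i::wellorder set \<Rightarrow> 'i set set \<Rightarrow> 'i set" where
  "clusters V B = cluster_rep B ` V"

lemma same_cluster_refl: "same_cluster B i i"
  by (simp add: same_cluster_def)

lemma same_cluster_sym: "same_cluster B i j \<Longrightarrow> same_cluster B j i"
  unfolding same_cluster_def by (rule sympD[OF symp_rtranclp]) (auto intro: sympI)

lemma same_cluster_trans: "same_cluster B i j \<Longrightarrow> same_cluster B j k \<Longrightarrow> same_cluster B i k"
  unfolding same_cluster_def by (rule rtranclp_trans)

lemma same_cluster_mono: "B \<subseteq> B' \<Longrightarrow> same_cluster B i j \<Longrightarrow> same_cluster B' i j"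
  unfolding same_cluster_def by (erule rtranclp_mono[THEN predicate2D, rotated]) auto

lemma same_cluster_if_in: "A \<in> B \<Longrightarrow> i \<in> A \<Longrightarrow> j \<in> A \<Longrightarrow> same_cluster B i j"
  unfolding same_cluster_def by auto

lemma same_cluster_closed:
  assumes "same_cluster B i j" "\<forall>A\<in>B. A \<subseteq> V" "i \<in> V"
  shows "j \<in> V"
  using assms(1,3) unfolding same_cluster_def by induction (use assms(2) in auto)

lemma same_cluster_const:
  assumes "same_cluster B i j" "\<forall>A\<in>B. \<forall>i\<in>A. \<forall>j\<in>A. \<gamma> i = \<gamma> j"
  shows "\<gamma> i = \<gamma> j"
  using assms(1) unfolding same_cluster_def by induction (use assms(2) in auto)

lemma same_cluster_rep: "same_cluster B i (cluster_rep B i)"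
  unfolding cluster_rep_def by (rule LeastI[of _ i]) (rule same_cluster_refl)

lemma cluster_rep_eq:
  assumes "same_cluster B i j"
  shows "cluster_rep B i = cluster_rep B j"
proof -
  have "same_cluster B i = same_cluster B j"
    using assms by (intro ext iffI) (auto intro: same_cluster_sym same_cluster_trans)
  then show ?thesis by (simp add: cluster_rep_def)
qed

lemma cluster_rep_idem: "cluster_rep B (cluster_rep B i) = cluster_rep B i"
  by (rule cluster_rep_eq[symmetric]) (rule same_cluster_rep)

lemma cluster_rep_in: "\<forall>A\<in>B. A \<subseteq> V \<Longrightarrow> i \<in> V \<Longrightarrow> cluster_rep B i \<in> V"
  by (rule same_cluster_closed[OF same_cluster_rep])

lemma cluster_rep_mono: "B \<subseteq> B' \<Longrightarrow> cluster_rep B' (cluster_rep B i) = cluster_rep B' i"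
  by (rule cluster_rep_eq[symmetric]) (rule same_cluster_mono[OF _ same_cluster_rep])

lemma clusters_subset: "\<forall>A\<in>B. A \<subseteq> V \<Longrightarrow> clusters V B \<subseteq> V"
  by (auto simp: clusters_def cluster_rep_in)

definition compatible :: "'i set \<Rightarrow> 'a set \<Rightarrow> 'i set set \<Rightarrow> ('i \<Rightarrow> 'a) set" where
  "compatible V F B = {\<gamma> \<in> PiE V (\<lambda>_. F). \<forall>A\<in>B. \<forall>i\<in>A. \<forall>j\<in>A. \<gamma> i = \<gamma> j}"

lemma compatible_eq_const_on_clusters:
  assumes "\<forall>A\<in>B. A \<subseteq> V"
  shows "compatible V F B = {\<gamma> \<in> PiE V (\<lambda>_. F). \<forall>i\<in>V. \<gamma> i = \<gamma> (cluster_rep B i)}"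
proof -
  have "(\<forall>A\<in>B. \<forall>i\<in>A. \<forall>j\<in>A. \<gamma> i = \<gamma> j) \<longleftrightarrow> (\<forall>i\<in>V. \<gamma> i = \<gamma> (cluster_rep B i))"
    for \<gamma>
  proof
    assume "\<forall>A\<in>B. \<forall>i\<in>A. \<forall>j\<in>A. \<gamma> i = \<gamma> j"
    then show "\<forall>i\<in>V. \<gamma> i = \<gamma> (cluster_rep B i)"
      using same_cluster_const[OF same_cluster_rep] by blast
  next
    assume rep: "\<forall>i\<in>V. \<gamma> i = \<gamma> (cluster_rep B i)"
    show "\<forall>A\<in>B. \<forall>i\<in>A. \<forall>j\<in>A. \<gamma> i = \<gamma> j"
    proof (intro ballI)
      fix A i j assume "A \<in> B" "i \<in> A" "j \<in> A"
      then have "cluster_rep B i = cluster_rep B j" "i \<in> V" "j \<in> V"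
        using cluster_rep_eq[OF same_cluster_if_in] assms by blast+
      then show "\<gamma> i = \<gamma> j" using rep by metis
    qed
  qed
  then show ?thesis unfolding compatible_def by blast
qed

lemma bij_betw_compatible:
  assumes "\<forall>A\<in>B. A \<subseteq> V"
  shows "bij_betw (\<lambda>\<eta>. restrict (\<eta> \<circ> cluster_rep B) V) (PiE (clusters V B) (\<lambda>_. F)) (compatible V F B)"
proof (rule bij_betwI[where g = "\<lambda>\<gamma>. restrict \<gamma> (clusters V B)"])
  have rep: "cluster_rep B i \<in> V" if "i \<in> V" for i
    using cluster_rep_in[OF assms that] .
  show "(\<lambda>\<eta>. restrict (\<eta> \<circ> cluster_rep B) V) \<in> PiE (clusters V B) (\<lambda>_. F) \<rightarrow> compatible V F B"
    unfolding compatible_eq_const_on_clusters[OF assms]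
    by (auto simp: clusters_def cluster_rep_idem rep)
  show "(\<lambda>\<gamma>. restrict \<gamma> (clusters V B)) \<in> compatible V F B \<rightarrow> PiE (clusters V B) (\<lambda>_. F)"
    unfolding compatible_def clusters_def using rep by auto
  show "restrict (restrict (\<eta> \<circ> cluster_rep B) V) (clusters V B) = \<eta>"
    if "\<eta> \<in> PiE (clusters V B) (\<lambda>_. F)" for \<eta>
  proof
    fix x
    show "restrict (restrict (\<eta> \<circ> cluster_rep B) V) (clusters V B) x = \<eta> x"
    proof (cases "x \<in> clusters V B")
      case True
      then have "x \<in> V" "cluster_rep B x = x"
        using clusters_subset[OF assms] by (auto simp: clusters_def cluster_rep_idem)
      with True show ?thesis by simp
    qed (use that in \<open>simp add: PiE_def extensional_def\<close>)
  qed
  show "restrict (restrict \<gamma> (clusters V B) \<circ> cluster_rep B) V = \<gamma>"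
    if "\<gamma> \<in> compatible V F B" for \<gamma>
    using that rep unfolding compatible_eq_const_on_clusters[OF assms]
    by (intro ext) (auto simp: clusters_def PiE_def extensional_def)
qed

lemma card_compatible:
  assumes "finite V" "\<forall>A\<in>B. A \<subseteq> V"
  shows "card (compatible V F B) = card F ^ card (clusters V B)"
  using bij_betw_same_card[OF bij_betw_compatible[OF assms(2), of F]] assms(1)
  by (simp add: card_PiE clusters_def)

lemma prod_list_map_eq_prod_power_count:
  fixes g :: "'b \<Rightarrow> 'c::comm_monoid_mult"
  assumes "finite I" "f ` set xs \<subseteq> I"
  shows "prod_list (map (\<lambda>x. g (f x)) xs) = (\<Prod>b\<in>I. g b ^ length (filter (\<lambda>x. f x = b) xs))"
  using assms(2)
proof (induction xs)
  case (Cons x xs)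
  let ?count = "\<lambda>b xs. length (filter (\<lambda>x. f x = b) xs)"
  have "(\<Prod>b\<in>I. g b ^ ?count b (x # xs))
      = (\<Prod>b\<in>I. g b ^ (if f x = b then 1 else 0)) * (\<Prod>b\<in>I. g b ^ ?count b xs)"
    by (auto simp: prod.distrib[symmetric] power_add[symmetric] intro!: prod.cong)
  also have "(\<Prod>b\<in>I. g b ^ (if f x = b then 1 else 0)) = g (f x)"
    using Cons.prems assms(1) by (simp add: prod.delta' if_distrib[of "power _"] cong: if_cong)
  finally show ?case using Cons by simp
qed simp

lemma card_mult_le_card_mult_inter:
  fixes U W T :: "'a::ab_group_add set"
  assumes "finite U" "finite W" "finite T"
    and diff_U: "\<And>u u'. u \<in> U \<Longrightarrow> u' \<in> U \<Longrightarrow> u - u' \<in> U"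
    and diff_W: "\<And>w w'. w \<in> W \<Longrightarrow> w' \<in> W \<Longrightarrow> w - w' \<in> W"
    and add_T: "\<And>u w. u \<in> U \<Longrightarrow> w \<in> W \<Longrightarrow> u + w \<in> T"
  shows "card U * card W \<le> card T * card (U \<inter> W)"
proof -
  define fibre where "fibre z = {p \<in> U \<times> W. fst p + snd p = z}" for z
  have card_fibre: "card (fibre z) \<le> card (U \<inter> W)" for z
  proof (cases "fibre z = {}")
    case False
    then obtain u0 w0 where "u0 \<in> U" "w0 \<in> W" "u0 + w0 = z" by (auto simp: fibre_def)
    have "fst p - u0 \<in> U \<inter> W" if "p \<in> fibre z" for p
    proof -
      \<comment> \<open>Two decompositions of z differ by an element of U \<inter> W.\<close>
      have "fst p - u0 = w0 - snd p"
        using that \<open>u0 + w0 = z\<close> by (simp add: fibre_def algebra_simps eq_diff_eq diff_eq_eq)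
      moreover have "fst p - u0 \<in> U" "w0 - snd p \<in> W"
        using that \<open>u0 \<in> U\<close> \<open>w0 \<in> W\<close> diff_U diff_W by (auto simp: fibre_def)
      ultimately show ?thesis by (metis IntI)
    qed
    then have "(\<lambda>p. fst p - u0) ` fibre z \<subseteq> U \<inter> W" by blast
    moreover have "inj_on (\<lambda>p. fst p - u0) (fibre z)"
      by (auto simp: inj_on_def fibre_def prod_eq_iff algebra_simps)
    ultimately show ?thesis
      using assms(1,2) by (intro card_inj_on_le) auto
  qed simp
  have "U \<times> W = (\<Union>z\<in>T. fibre z)"
    using add_T by (auto simp: fibre_def)
  then have "card U * card W = card (\<Union>z\<in>T. fibre z)"
    by (metis card_cartesian_product)
  also have "\<dots> \<le> (\<Sum>z\<in>T. card (fibre z))" by (rule card_UN_le[OF assms(3)])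
  also have "\<dots> \<le> card T * card (U \<inter> W)"
    using sum_mono[of T _ "\<lambda>_. card (U \<inter> W)", OF card_fibre] by simp
  finally show ?thesis .
qed

text \<open>Z C consists of the C-compatible configurations with values in the two-element group 2,
  extended by 0 off V; these are subgroups, and card (Z C) = 2 ^ card (clusters V C).\<close>
lemma card_clusters_supermodular:
  fixes V :: "'i::wellorder set"
  assumes "finite V" "\<forall>A\<in>B. A \<subseteq> V" "\<forall>A\<in>B'. A \<subseteq> V"
  shows "card (clusters V B) + card (clusters V B')
    \<le> card (clusters V (B \<inter> B')) + card (clusters V (B \<union> B'))"
proof -
  define Z :: "'i set set \<Rightarrow> ('i \<Rightarrow> 2) set" where
    "Z C = {f. (\<forall>i. i \<notin> V \<longrightarrow> f i = 0) \<and> (\<forall>A\<in>C. \<forall>i\<in>A. \<forall>j\<in>A. f i = f j)}" for C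
  have card_Z: "card (Z C) = 2 ^ card (clusters V C)" if C: "\<forall>A\<in>C. A \<subseteq> V" for C
  proof -
    have "bij_betw (\<lambda>f. restrict f V) (Z C) (compatible V UNIV C)"
    proof (rule bij_betwI[where g = "\<lambda>\<gamma> i. if i \<in> V then \<gamma> i else 0"])
      show "(\<lambda>f. restrict f V) \<in> Z C \<rightarrow> compatible V UNIV C"
        using C unfolding compatible_def Z_def by fastforce
      show "(\<lambda>\<gamma> i. if i \<in> V then \<gamma> i else 0) \<in> compatible V UNIV C \<rightarrow> Z C"
        using C unfolding compatible_def Z_def by fastforce
      show "(\<lambda>i. if i \<in> V then restrict f V i else 0) = f" if "f \<in> Z C" for f
        using that unfolding Z_def by fastforce
      show "restrict (\<lambda>i. if i \<in> V then \<gamma> i else 0) V = \<gamma>" if "\<gamma> \<in> compatible V UNIV C" for \<gamma>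
        using that unfolding compatible_def PiE_def extensional_def by fastforce
    qed
    then show ?thesis
      using card_compatible[OF assms(1) C, of "UNIV :: 2 set"] by (simp add: bij_betw_same_card)
  qed
  have finite_Z: "finite (Z C)" if "\<forall>A\<in>C. A \<subseteq> V" for C
    using card_Z[OF that] by (intro card_ge_0_finite) simp
  have diff_Z: "f - g \<in> Z C" if "f \<in> Z C" "g \<in> Z C" for f g C
    using that unfolding Z_def fun_diff_def mem_Collect_eq by (metis diff_self)
  have add_Z: "f + g \<in> Z (B \<inter> B')" if "f \<in> Z B" "g \<in> Z B'" for f g
    using that unfolding Z_def plus_fun_def mem_Collect_eq by (metis IntD1 IntD2 add_0)
  have "card (Z B) * card (Z B') \<le> card (Z (B \<inter> B')) * card (Z B \<inter> Z B')"
    using assms by (intro card_mult_le_card_mult_inter finite_Z diff_Z add_Z) auto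
  also have "Z B \<inter> Z B' = Z (B \<union> B')" unfolding Z_def by blast
  finally have "card (Z B) * card (Z B') \<le> card (Z (B \<inter> B')) * card (Z (B \<union> B'))" .
  moreover have "\<forall>A\<in>B \<inter> B'. A \<subseteq> V" "\<forall>A\<in>B \<union> B'. A \<subseteq> V" using assms by blast+
  ultimately have "(2::nat) ^ (card (clusters V B) + card (clusters V B'))
      \<le> 2 ^ (card (clusters V (B \<inter> B')) + card (clusters V (B \<union> B')))"
    unfolding power_add using assms by (simp add: card_Z)
  then show ?thesis by (rule power_le_imp_le_exp[rotated]) simp
qed

section \<open>Spin products summed over compatible configurations\<close>

definition cluster_count :: "'i::wellorder set set \<Rightarrow> 'i list \<Rightarrow> 'i \<Rightarrow> nat" where
  "cluster_count B R b = length (filter (\<lambda>i. cluster_rep B i = b) R)"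

definition cluster_moment :: "real set \<Rightarrow> 'i::wellorder set \<Rightarrow> 'i set set \<Rightarrow> 'i list \<Rightarrow> real" where
  "cluster_moment F V B R = (\<Prod>b\<in>clusters V B. moment F (cluster_count B R b))"

lemma sum_prod_list_compatible:
  fixes V :: "'i::wellorder set" and F :: "real set"
  assumes "finite V" "\<forall>A\<in>B. A \<subseteq> V" "set R \<subseteq> V" "finite F" "F \<noteq> {}"
  shows "(\<Sum>\<gamma>\<in>compatible V F B. prod_list (map \<gamma> R))
    = card F ^ card (clusters V B) * cluster_moment F V B R"
proof -
  have finite_clusters: "finite (clusters V B)" using assms(1) by (simp add: clusters_def)
  have rep_R: "cluster_rep B ` set R \<subseteq> clusters V B" using assms(3) by (auto simp: clusters_def)
  have "(\<Sum>\<gamma>\<in>compatible V F B. prod_list (map \<gamma> R))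
      = (\<Sum>\<eta>\<in>PiE (clusters V B) (\<lambda>_. F). prod_list (map (restrict (\<eta> \<circ> cluster_rep B) V) R))"
    using sum.reindex_bij_betw[OF bij_betw_compatible[OF assms(2), of F], of "\<lambda>\<gamma>. prod_list (map \<gamma> R)"]
    by simp
  also have "\<dots> = (\<Sum>\<eta>\<in>PiE (clusters V B) (\<lambda>_. F). \<Prod>b\<in>clusters V B. \<eta> b ^ cluster_count B R b)"
  proof (rule sum.cong[OF refl])
    fix \<eta> :: "'i \<Rightarrow> real"
    have "prod_list (map (restrict (\<eta> \<circ> cluster_rep B) V) R)
        = prod_list (map (\<lambda>i. \<eta> (cluster_rep B i)) R)"
      using assms(3) by (intro arg_cong[where f = prod_list]) auto
    also have "\<dots> = (\<Prod>b\<in>clusters V B. \<eta> b ^ cluster_count B R b)"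
      unfolding cluster_count_def by (rule prod_list_map_eq_prod_power_count[OF finite_clusters rep_R])
    finally show "prod_list (map (restrict (\<eta> \<circ> cluster_rep B) V) R)
        = (\<Prod>b\<in>clusters V B. \<eta> b ^ cluster_count B R b)" .
  qed
  also have "\<dots> = (\<Prod>b\<in>clusters V B. \<Sum>x\<in>F. x ^ cluster_count B R b)"
    by (rule prod_sum_PiE[symmetric]) (use finite_clusters assms(4) in auto)
  also have "\<dots> = (\<Prod>b\<in>clusters V B. card F * moment F (cluster_count B R b))"
    using assms(4,5) by (simp add: moment_def)
  finally show ?thesis by (simp add: prod.distrib cluster_moment_def)
qed

lemma cluster_moment_nonneg: "(\<And>x. x \<in> F \<Longrightarrow> - x \<in> F) \<Longrightarrow> 0 \<le> cluster_moment F V B R"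
  unfolding cluster_moment_def by (intro prod_nonneg moment_nonneg) auto

lemma sum_prod_list_compatible_nonneg:
  fixes V :: "'i::wellorder set" and F :: "real set"
  assumes "finite V" "\<forall>A\<in>B. A \<subseteq> V" "set R \<subseteq> V" "finite F" "F \<noteq> {}" "\<And>x. x \<in> F \<Longrightarrow> - x \<in> F"
  shows "0 \<le> (\<Sum>\<gamma>\<in>compatible V F B. prod_list (map \<gamma> R))"
  using assms by (simp add: sum_prod_list_compatible cluster_moment_nonneg)

lemma cluster_moment_append:
  assumes "finite F" "\<And>x. x \<in> F \<Longrightarrow> - x \<in> F"
  shows "cluster_moment F V B R * cluster_moment F V B S \<le> cluster_moment F V B (R @ S)"
  unfolding cluster_moment_def prod.distrib[symmetric]
  by (intro prod_mono conjI mult_nonneg_nonneg moment_nonneg)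
    (use assms moment_mult_le[OF assms] in \<open>simp_all add: cluster_count_def\<close>)

lemma length_filter_comp_eq_sum:
  assumes "finite I" "f ` set xs \<subseteq> I"
  shows "length (filter (\<lambda>x. h (f x) = c) xs) = (\<Sum>b\<in>{b\<in>I. h b = c}. length (filter (\<lambda>x. f x = b) xs))"
  using assms(2)
proof (induction xs)
  case (Cons x xs)
  let ?count = "\<lambda>b xs. length (filter (\<lambda>x. f x = b) xs)"
  have "(\<Sum>b\<in>{b\<in>I. h b = c}. ?count b (x # xs))
      = (\<Sum>b\<in>{b\<in>I. h b = c}. if f x = b then 1 else 0) + (\<Sum>b\<in>{b\<in>I. h b = c}. ?count b xs)"
    by (auto simp: sum.distrib[symmetric] intro!: sum.cong)
  also have "(\<Sum>b\<in>{b\<in>I. h b = c}. if f x = b then 1 else 0) = (if h (f x) = c then 1 else (0::nat))"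
    using Cons.prems assms(1) by (simp add: sum.delta')
  finally show ?case using Cons by simp
qed simp

text \<open>Each cluster of B' is a union of clusters of B, to which prod_moment_le applies.\<close>
lemma cluster_moment_mono:
  assumes "finite V" "finite F" "F \<noteq> {}" "\<And>x. x \<in> F \<Longrightarrow> - x \<in> F"
    and "B \<subseteq> B'" "\<forall>A\<in>B'. A \<subseteq> V" "set R \<subseteq> V"
  shows "cluster_moment F V B R \<le> cluster_moment F V B' R"
proof -
  let ?merged = "\<lambda>b'. {b \<in> clusters V B. cluster_rep B' b = b'}"
  have "cluster_rep B' ` clusters V B \<subseteq> clusters V B'"
    using cluster_rep_mono[OF assms(5)] by (auto simp: clusters_def)
  then have "cluster_moment F V B R
      = (\<Prod>b'\<in>clusters V B'. \<Prod>b\<in>?merged b'. moment F (cluster_count B R b))"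
    unfolding cluster_moment_def using assms(1)
    by (intro prod.group[symmetric]) (auto simp: clusters_def)
  also have "\<dots> \<le> (\<Prod>b'\<in>clusters V B'. moment F (\<Sum>b\<in>?merged b'. cluster_count B R b))"
    using assms(1-4)
    by (intro prod_mono conjI prod_nonneg prod_moment_le moment_nonneg) (auto simp: clusters_def)
  also have "\<dots> = cluster_moment F V B' R"
  proof -
    have "cluster_count B' R b' = (\<Sum>b\<in>?merged b'. cluster_count B R b)" for b'
    proof -
      have "cluster_count B' R b' = length (filter (\<lambda>i. cluster_rep B' (cluster_rep B i) = b') R)"
        unfolding cluster_count_def cluster_rep_mono[OF assms(5)] ..
      also have "\<dots> = (\<Sum>b\<in>?merged b'. cluster_count B R b)"
        unfolding cluster_count_def using assms(1,7)
        by (intro length_filter_comp_eq_sum) (auto simp: clusters_def)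
      finally show ?thesis .
    qed
    then show ?thesis by (simp add: cluster_moment_def)
  qed
  finally show ?thesis .
qed

lemma sum_compatible_mult_le:
  fixes V :: "'i::wellorder set" and F :: "real set"
  assumes "finite V" "finite F" "F \<noteq> {}" "\<And>x. x \<in> F \<Longrightarrow> - x \<in> F"
    and "\<forall>A\<in>B. A \<subseteq> V" "\<forall>A\<in>B'. A \<subseteq> V" "set R \<subseteq> V" "set S \<subseteq> V"
  shows "(\<Sum>\<gamma>\<in>compatible V F B. prod_list (map \<gamma> R)) * (\<Sum>\<gamma>\<in>compatible V F B'. prod_list (map \<gamma> S))
    \<le> (\<Sum>\<gamma>\<in>compatible V F (B \<union> B'). prod_list (map \<gamma> (R @ S))) * card (compatible V F (B \<inter> B'))"
proof -
  let ?k = "\<lambda>B. card (clusters V B)" and ?m = "cluster_moment F V"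
  define c where "c = real (card F)"
  have union: "\<forall>A\<in>B \<union> B'. A \<subseteq> V" and inter: "\<forall>A\<in>B \<inter> B'. A \<subseteq> V" using assms(5,6) by auto
  have "c \<ge> 1" using assms(2,3) by (simp add: c_def Suc_le_eq card_gt_0_iff)
  then have count: "c ^ ?k B * c ^ ?k B' \<le> c ^ ?k (B \<inter> B') * c ^ ?k (B \<union> B')"
    unfolding power_add[symmetric]
    by (intro power_increasing card_clusters_supermodular assms(1,5,6))
  have "?m B R * ?m B' S \<le> ?m (B \<union> B') R * ?m (B \<union> B') S"
    using assms by (intro mult_mono cluster_moment_mono cluster_moment_nonneg) auto
  also have "\<dots> \<le> ?m (B \<union> B') (R @ S)" using assms(2,4) by (rule cluster_moment_append)
  finally have moments: "?m B R * ?m B' S \<le> ?m (B \<union> B') (R @ S)" .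
  have "(c ^ ?k B * c ^ ?k B') * (?m B R * ?m B' S)
      \<le> (c ^ ?k (B \<inter> B') * c ^ ?k (B \<union> B')) * ?m (B \<union> B') (R @ S)"
    by (rule mult_mono[OF count moments]) (use \<open>c \<ge> 1\<close> assms(4) in \<open>simp_all add: cluster_moment_nonneg\<close>)
  moreover have RS: "set (R @ S) \<subseteq> V" using assms(7,8) by simp
  ultimately show ?thesis
    unfolding sum_prod_list_compatible[OF assms(1,5,7,2,3)] sum_prod_list_compatible[OF assms(1,6,8,2,3)]
      sum_prod_list_compatible[OF assms(1) union RS assms(2,3)] card_compatible[OF assms(1) inter]
    by (simp add: c_def algebra_simps)
qed

section \<open>The Potts model\<close>

lemma finite_Fc: "finite (Fc q)"
  by (simp add: Fc_def)

lemma Fc_nonempty: "0 < q \<Longrightarrow> Fc q \<noteq> {}"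
  by (simp add: Fc_def)

lemma minus_in_Fc:
  assumes "x \<in> Fc q"
  shows "- x \<in> Fc q"
proof -
  obtain k where "k < q" "x = real k - (real q - 1) / 2" using assms unfolding Fc_def by auto
  then have "- x = real (q - 1 - k) - (real q - 1) / 2" "q - 1 - k < q"
    by (simp_all add: of_nat_diff)
  then show ?thesis unfolding Fc_def by force
qed

lemma finite_interactions: "finite (interactions n)"
  by (rule finite_subset[of _ "Pow {1..n}"]) (auto simp: interactions_def)

lemma interactions_subset: "B \<subseteq> interactions n \<Longrightarrow> \<forall>A\<in>B. A \<subseteq> {1..n}"
  by (auto simp: interactions_def)

lemma delta_eq_1_iff: "delta A \<gamma> = 1 \<longleftrightarrow> (\<forall>i\<in>A. \<forall>j\<in>A. \<gamma> i = \<gamma> j)"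
  unfolding delta_def by (metis zero_neq_one)

lemma compatible_eq_delta: "compatible {1..n} (Fc q) B = {\<gamma> \<in> Omega q n. \<forall>A\<in>B. delta A \<gamma> = 1}"
  by (simp only: compatible_def Omega_def delta_eq_1_iff)

lemma delta_cases: "delta A \<gamma> = 0 \<or> delta A \<gamma> = 1"
  unfolding delta_def by simp

lemma prod_delta: "finite B \<Longrightarrow> (\<Prod>A\<in>B. delta A \<gamma>) = (if \<forall>A\<in>B. delta A \<gamma> = 1 then 1 else 0)"
  by (induction B rule: finite_induct) (use delta_cases in auto)

lemma Zg_eq_sum_bonds:
  "Zg n J \<gamma> = (\<Sum>B\<in>Pow (interactions n).
      (\<Prod>A\<in>B. exp (J A) - 1) * (if \<forall>A\<in>B. delta A \<gamma> = 1 then 1 else 0))"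
proof -
  have "Zg n J \<gamma> = (\<Prod>A\<in>interactions n. exp (J A * delta A \<gamma>))"
    by (simp add: Zg_def Ham_def exp_sum finite_interactions)
  also have "\<dots> = (\<Prod>A\<in>interactions n. (exp (J A) - 1) * delta A \<gamma> + 1)"
  proof (intro prod.cong refl)
    fix A show "exp (J A * delta A \<gamma>) = (exp (J A) - 1) * delta A \<gamma> + 1"
      using delta_cases[of A \<gamma>] by auto
  qed
  also have "\<dots> = (\<Sum>B\<in>Pow (interactions n). \<Prod>A\<in>B. (exp (J A) - 1) * delta A \<gamma>)"
    by (simp add: prod_add finite_interactions)
  also have "\<dots> = (\<Sum>B\<in>Pow (interactions n).
      (\<Prod>A\<in>B. exp (J A) - 1) * (if \<forall>A\<in>B. delta A \<gamma> = 1 then 1 else 0))"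
  proof (intro sum.cong refl)
    fix B assume "B \<in> Pow (interactions n)"
    then have "finite B" using finite_interactions finite_subset by blast
    then show "(\<Prod>A\<in>B. (exp (J A) - 1) * delta A \<gamma>)
        = (\<Prod>A\<in>B. exp (J A) - 1) * (if \<forall>A\<in>B. delta A \<gamma> = 1 then 1 else 0)"
      by (simp only: prod.distrib prod_delta)
  qed
  finally show ?thesis .
qed

definition gibbs_sum :: "nat \<Rightarrow> nat \<Rightarrow> (nat set \<Rightarrow> real) \<Rightarrow> ((nat \<Rightarrow> real) \<Rightarrow> real) \<Rightarrow> real" where
  "gibbs_sum q n J X = (\<Sum>\<gamma>\<in>Omega q n. X \<gamma> * Zg n J \<gamma>)"

lemma gibbs_sum_eq_sum_bonds:
  "gibbs_sum q n J X = (\<Sum>B\<in>Pow (interactions n).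
      (\<Prod>A\<in>B. exp (J A) - 1) * (\<Sum>\<gamma>\<in>compatible {1..n} (Fc q) B. X \<gamma>))"
proof -
  have "gibbs_sum q n J X = (\<Sum>B\<in>Pow (interactions n). \<Sum>\<gamma>\<in>Omega q n.
      (\<Prod>A\<in>B. exp (J A) - 1) * (if \<forall>A\<in>B. delta A \<gamma> = 1 then X \<gamma> else 0))"
    unfolding gibbs_sum_def Zg_eq_sum_bonds sum_distrib_left
    by (subst sum.swap) (intro sum.cong refl; simp)
  also have "\<dots> = (\<Sum>B\<in>Pow (interactions n).
      (\<Prod>A\<in>B. exp (J A) - 1) * (\<Sum>\<gamma>\<in>compatible {1..n} (Fc q) B. X \<gamma>))"
    unfolding compatible_eq_delta sum_distrib_left[symmetric]
    by (simp add: sum.inter_filter Omega_def finite_Fc finite_PiE)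
  finally show ?thesis .
qed

lemma gibbs_sum_mult_le:
  assumes "0 < q" "\<And>A. A \<in> interactions n \<Longrightarrow> 0 \<le> J A"
    and "set R \<subseteq> {1..n}" "set S \<subseteq> {1..n}"
  shows "gibbs_sum q n J (sigmaR R) * gibbs_sum q n J (sigmaR S)
    \<le> gibbs_sum q n J (sigmaR (R @ S)) * gibbs_sum q n J (\<lambda>_. 1)"
proof -
  let ?w = "\<lambda>B. \<Prod>A\<in>B. exp (J A) - 1"
  let ?M = "\<lambda>B R. \<Sum>\<gamma>\<in>compatible {1..n} (Fc q) B. prod_list (map \<gamma> R)"
  let ?C = "\<lambda>B. real (card (compatible {1..n} (Fc q) B))"
  have Fc: "finite (Fc q)" "Fc q \<noteq> {}" "\<And>x. x \<in> Fc q \<Longrightarrow> - x \<in> Fc q"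
    using assms(1) by (simp_all add: finite_Fc Fc_nonempty minus_in_Fc)
  have w_nonneg: "0 \<le> ?w B" if "B \<subseteq> interactions n" for B
    using that assms(2) by (intro prod_nonneg) auto
  have M_nonneg: "0 \<le> ?M B R" if "B \<subseteq> interactions n" "set R \<subseteq> {1..n}" for B R
    using that Fc by (intro sum_prod_list_compatible_nonneg interactions_subset) auto
  have "(\<Sum>B\<in>Pow (interactions n). ?w B * ?M B R) * (\<Sum>B\<in>Pow (interactions n). ?w B * ?M B S)
      \<le> (\<Sum>B\<in>Pow (interactions n). ?w B * ?M B (R @ S))
        * (\<Sum>B\<in>Pow (interactions n). ?w B * ?C B)"
  proof (rule ahlswede_daykin[OF finite_interactions])
    fix B assume "B \<subseteq> interactions n"
    then show "0 \<le> ?w B * ?M B R \<and> 0 \<le> ?w B * ?M B S \<and> 0 \<le> ?w B * ?M B (R @ S)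
        \<and> 0 \<le> ?w B * ?C B"
      using assms(3,4)
      by (intro conjI mult_nonneg_nonneg w_nonneg M_nonneg of_nat_0_le_iff) auto
  next
    fix B B' assume B: "B \<subseteq> interactions n" and B': "B' \<subseteq> interactions n"
    have "finite B" "finite B'" using B B' finite_interactions finite_subset by blast+
    then have w: "?w B * ?w B' = ?w (B \<union> B') * ?w (B \<inter> B')"
      by (rule prod.union_inter[symmetric])
    have M: "?M B R * ?M B' S \<le> ?M (B \<union> B') (R @ S) * ?C (B \<inter> B')"
      using Fc assms(3,4) interactions_subset[OF B] interactions_subset[OF B']
      by (intro sum_compatible_mult_le) auto
    have "?w B * ?M B R * (?w B' * ?M B' S) = (?w B * ?w B') * (?M B R * ?M B' S)"
      by (simp only: mult_ac)
    also have "\<dots> \<le> (?w B * ?w B') * (?M (B \<union> B') (R @ S) * ?C (B \<inter> B'))"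
      using w_nonneg[OF B] w_nonneg[OF B'] by (intro mult_left_mono[OF M] mult_nonneg_nonneg)
    also have "\<dots> = ?w (B \<union> B') * ?M (B \<union> B') (R @ S) * (?w (B \<inter> B') * ?C (B \<inter> B'))"
      unfolding w by (simp only: mult_ac)
    finally show "?w B * ?M B R * (?w B' * ?M B' S)
        \<le> ?w (B \<union> B') * ?M (B \<union> B') (R @ S) * (?w (B \<inter> B') * ?C (B \<inter> B'))" .
  qed
  then show ?thesis
    by (simp add: gibbs_sum_eq_sum_bonds sigmaR_def)
qed

lemma Zpart_pos:
  assumes "0 < q"
  shows "0 < Zpart q n J"
proof -
  have "Omega q n \<noteq> {}"
    using Fc_nonempty[OF assms] by (simp add: Omega_def PiE_eq_empty_iff)
  then show ?thesis
    unfolding Zpart_def Zg_def by (intro sum_pos) (auto simp: Omega_def finite_Fc finite_PiE)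
qed

lemma expect_eq_gibbs_sum: "expect q n J X = gibbs_sum q n J X / Zpart q n J"
  by (simp add: expect_def Prob_def gibbs_sum_def sum_divide_distrib)

theorem theorem2:
  fixes q n :: nat and J :: "nat set \<Rightarrow> real" and R S :: "nat list"
  assumes "2 \<le> q" and "1 \<le> n"
    and "\<And>A. A \<in> interactions n \<Longrightarrow> 0 \<le> J A"
    and "set R \<subseteq> {1..n}" and "set S \<subseteq> {1..n}"
  shows "expect q n J (\<lambda>\<gamma>. sigmaR R \<gamma> * sigmaR S \<gamma>)
           - expect q n J (sigmaR R) * expect q n J (sigmaR S) \<ge> 0"
proof -
  have "0 < q" using assms(1) by simp
  have "Zpart q n J = gibbs_sum q n J (\<lambda>_. 1)"
    by (simp add: Zpart_def gibbs_sum_def)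
  with gibbs_sum_mult_le[OF \<open>0 < q\<close> assms(3-5)]
  have "gibbs_sum q n J (sigmaR R) * gibbs_sum q n J (sigmaR S)
      \<le> gibbs_sum q n J (sigmaR (R @ S)) * Zpart q n J" by simp
  moreover have "(\<lambda>\<gamma>. sigmaR R \<gamma> * sigmaR S \<gamma>) = sigmaR (R @ S)"
    by (simp add: sigmaR_def fun_eq_iff)
  ultimately show ?thesis
    using Zpart_pos[OF \<open>0 < q\<close>, of n J] by (simp add: expect_eq_gibbs_sum field_simps)
qed

end
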